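(* For $a,b\ge0$ let $p_k(a,b)=\mathbb{P}(X-Y=k)$, $k\in\mathbb{Z}$, for independent $X\sim\mathrm{Poi}_a$, $Y\sim\mathrm{Poi}_b$. Then for all $a,b\ge0$ and all $N\ge1$, \[ \sum_{k\in\mathbb{Z}:\,|k|\ge\sqrt N}\sqrt{p_k(a,b)\,p_{-k}(a,b)}\le\frac{2\sqrt{ab}}{N}. \]
   Context: $\mathrm{Poi}_\lambda$ is the Poisson distribution with parameter $\lambda$, with $\mathrm{Poi}_0$ the point mass at $0$. *)

theory Defs
  imports "HOL-Analysis.Analysis"
begin

text \<open>Probability mass function of the Poisson distribution with parameter \<open>l \<ge> 0\<close>;
  for \<open>l = 0\<close> this is the point mass at 0 (since \<open>0 ^ 0 = 1\<close>).\<close>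
definition poi :: "real \<Rightarrow> nat \<Rightarrow> real" where
  "poi l n = l ^ n / fact n * exp (- l)"

definition pdiff :: "real \<Rightarrow> real \<Rightarrow> int \<Rightarrow> real" where
  "pdiff a b k = (\<Sum>\<^sub>\<infinity>(x, y) \<in> {(x::nat, y::nat). int x - int y = k}. poi a x * poi b y)"

end

(* With c = sqrt(a b), the Skellam probabilities satisfy
   sqrt(p_k(a,b) p_{-k}(a,b)) = exp(2c - a - b) p_k(c,c): for k >= 0, p_k(a,b) is
   exp(-(a+b)) a^k times a series depending on a and b only through a b, and
   p_{-k}(a,b) = p_k(b,a).
   By AM-GM the exponential factor is at most 1, and the tail of p_k(c,c) beyond sqrt N is
   bounded by Chebyshev's inequality: X - Y has second moment 2c for X, Y ~ Poi_c. *)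
theory Submission
  imports Defs
begin

lemma has_sum_Sigma_nonneg:
  fixes f :: "'a \<times> 'b \<Rightarrow> real"
  assumes "\<And>x. x \<in> A \<Longrightarrow> ((\<lambda>y. f (x, y)) has_sum g x) (B x)"
    and "(g has_sum S) A"
    and "\<And>x y. x \<in> A \<Longrightarrow> y \<in> B x \<Longrightarrow> 0 \<le> f (x, y)"
  shows "(f has_sum S) (Sigma A B)"
  using assms by (intro has_sum_SigmaI summable_on_SigmaI) (auto dest: has_sum_imp_summable)

lemma infsum_Markov_inequality:
  fixes f h :: "'a \<Rightarrow> real"
  assumes h: "(h has_sum M) A" and "B \<subseteq> A" and "c > 0"
    and h_nonneg: "\<And>x. x \<in> A \<Longrightarrow> 0 \<le> h x"
    and f_nonneg: "\<And>x. x \<in> B \<Longrightarrow> 0 \<le> f x"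
    and f_le: "\<And>x. x \<in> B \<Longrightarrow> c * f x \<le> h x"
  shows "infsum f B \<le> M / c"
proof -
  have hc: "((\<lambda>x. h x / c) has_sum M / c) A"
    using has_sum_cmult_left[OF h, of "inverse c"] by (simp add: divide_inverse mult.commute)
  have hc_B: "(\<lambda>x. h x / c) summable_on B"
    using summable_on_subset_banach[OF has_sum_imp_summable[OF hc] \<open>B \<subseteq> A\<close>] .
  have f_le_hc: "f x \<le> h x / c" if "x \<in> B" for x
    using f_le[OF that] \<open>c > 0\<close> by (simp add: field_simps)
  have f_B: "f summable_on B"
    using hc_B f_le_hc f_nonneg by (rule summable_on_comparison_test)
  have "infsum f B \<le> (\<Sum>\<^sub>\<infinity>x\<in>B. h x / c)"
    using f_B hc_B f_le_hc by (rule infsum_mono)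
  also have "\<dots> \<le> (\<Sum>\<^sub>\<infinity>x\<in>A. h x / c)"
    using hc_B hc \<open>B \<subseteq> A\<close> h_nonneg \<open>c > 0\<close>
    by (intro infsum_mono2) (auto dest: has_sum_imp_summable)
  also have "\<dots> = M / c"
    using hc by (rule infsumI)
  finally show ?thesis .
qed

lemma infsum_infsum_fibres:
  fixes f :: "'a \<Rightarrow> 'b::banach"
  assumes "f summable_on {p. \<phi> p \<in> A}"
  shows "(\<Sum>\<^sub>\<infinity>k\<in>A. \<Sum>\<^sub>\<infinity>p\<in>{p. \<phi> p = k}. f p) = (\<Sum>\<^sub>\<infinity>p\<in>{p. \<phi> p \<in> A}. f p)"
proof -
  let ?S = "Sigma A (\<lambda>k. {p. \<phi> p = k})"
  have inj: "inj_on snd ?S"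
    by (auto simp: inj_on_def)
  have img: "snd ` ?S = {p. \<phi> p \<in> A}"
    by force
  have "(f \<circ> snd) summable_on ?S"
    using assms summable_on_reindex[OF inj, of f] img by simp
  then have "(\<Sum>\<^sub>\<infinity>k\<in>A. \<Sum>\<^sub>\<infinity>p\<in>{p. \<phi> p = k}. f p) = infsum (f \<circ> snd) ?S"
    by (subst infsum_Sigma_banach[symmetric]) simp_all
  also have "\<dots> = (\<Sum>\<^sub>\<infinity>p\<in>{p. \<phi> p \<in> A}. f p)"
    using infsum_reindex[OF inj, of f] img by simp
  finally show ?thesis .
qed

lemma poi_nonneg: "l \<ge> 0 \<Longrightarrow> poi l n \<ge> 0"
  by (simp add: poi_def)

lemma poi_Suc: "real (Suc n) * poi l (Suc n) = l * poi l n"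
  by (simp add: poi_def field_simps del: of_nat_Suc)

lemma poi_sums: "poi l sums 1"
proof -
  have "(\<lambda>n. l ^ n /\<^sub>R fact n * exp (- l)) sums (exp l * exp (- l))"
    by (rule sums_mult2[OF exp_converges])
  moreover have "poi l = (\<lambda>n. l ^ n /\<^sub>R fact n * exp (- l))"
    by (simp add: poi_def fun_eq_iff scaleR_conv_of_real divide_inverse)
  ultimately show ?thesis
    by (simp add: exp_minus)
qed

lemma poi_mean_sums: "(\<lambda>n. real n * poi l n) sums l"
proof -
  have "(\<lambda>n. real (Suc n) * poi l (Suc n)) sums (l * 1)"
    unfolding poi_Suc by (rule sums_mult[OF poi_sums])
  then show ?thesis
    by (subst (asm) sums_Suc_iff) simp
qed

lemma poi_second_moment_sums: "(\<lambda>n. real n ^ 2 * poi l n) sums (l ^ 2 + l)"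
proof -
  have "real (Suc n) ^ 2 * poi l (Suc n) = l * (real n * poi l n + poi l n)" for n
    by (simp only: power2_eq_square mult.assoc poi_Suc) (simp add: algebra_simps)
  moreover have "(\<lambda>n. l * (real n * poi l n + poi l n)) sums (l * (l + 1))"
    by (rule sums_mult[OF sums_add[OF poi_mean_sums poi_sums]])
  ultimately have "(\<lambda>n. real (Suc n) ^ 2 * poi l (Suc n)) sums (l ^ 2 + l)"
    by (simp add: power2_eq_square algebra_simps)
  then show ?thesis
    by (subst (asm) sums_Suc_iff) simp
qed

lemma poi_has_sum: "l \<ge> 0 \<Longrightarrow> (poi l has_sum 1) UNIV"
  by (rule sums_nonneg_imp_has_sum[OF poi_sums poi_nonneg])

lemma poi_mean_has_sum: "l \<ge> 0 \<Longrightarrow> ((\<lambda>n. real n * poi l n) has_sum l) UNIV"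
  by (rule sums_nonneg_imp_has_sum[OF poi_mean_sums]) (simp add: poi_nonneg)

lemma poi_second_moment_has_sum:
  "l \<ge> 0 \<Longrightarrow> ((\<lambda>n. real n ^ 2 * poi l n) has_sum (l ^ 2 + l)) UNIV"
  by (rule sums_nonneg_imp_has_sum[OF poi_second_moment_sums]) (simp add: poi_nonneg)

lemma poi_pair_has_sum:
  assumes "a \<ge> 0" "b \<ge> 0"
  shows "((\<lambda>(x, y). poi a x * poi b y) has_sum 1) UNIV"
proof -
  have "((\<lambda>(x, y). poi a x * poi b y) has_sum 1) (UNIV \<times> UNIV)"
  proof (rule has_sum_Sigma_nonneg)
    show "((\<lambda>y. case (x, y) of (x, y) \<Rightarrow> poi a x * poi b y) has_sum poi a x) UNIV" for x
      using has_sum_cmult_right[OF poi_has_sum[OF assms(2)], of "poi a x"] by simp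
  qed (use assms in \<open>auto simp: poi_has_sum poi_nonneg\<close>)
  then show ?thesis
    by simp
qed

lemma poi_diff_second_moment_has_sum:
  assumes "a \<ge> 0" "b \<ge> 0"
  shows "((\<lambda>(x, y). (real x - real y) ^ 2 * (poi a x * poi b y))
            has_sum ((a - b) ^ 2 + a + b)) UNIV"
proof -
  define g where "g x = poi a x * (real x ^ 2 - 2 * b * real x + (b ^ 2 + b))" for x
  have inner: "((\<lambda>y. (real x - real y) ^ 2 * (poi a x * poi b y)) has_sum g x) UNIV" for x
  proof -
    have "((\<lambda>y. poi a x * (real x ^ 2 * poi b y + (- 2 * real x) * (real y * poi b y)
                          + real y ^ 2 * poi b y))
          has_sum poi a x * (real x ^ 2 * 1 + (- 2 * real x) * b + (b ^ 2 + b))) UNIV"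
      using assms
      by (intro has_sum_cmult_right has_sum_add poi_has_sum poi_mean_has_sum poi_second_moment_has_sum)
    then show ?thesis
      by (simp add: g_def power2_eq_square algebra_simps)
  qed
  have outer: "(g has_sum ((a - b) ^ 2 + a + b)) UNIV"
  proof -
    have moments:
      "((\<lambda>x. real x ^ 2 * poi a x + (- 2 * b) * (real x * poi a x) + (b ^ 2 + b) * poi a x)
          has_sum ((a ^ 2 + a) + (- 2 * b) * a + (b ^ 2 + b) * 1)) UNIV"
      using assms
      by (intro has_sum_cmult_right has_sum_add poi_has_sum poi_mean_has_sum poi_second_moment_has_sum)
    have g_eq:
      "(\<lambda>x. real x ^ 2 * poi a x + (- 2 * b) * (real x * poi a x) + (b ^ 2 + b) * poi a x) = g"
      by (simp add: g_def fun_eq_iff algebra_simps)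
    have sum_eq: "(a ^ 2 + a) + (- 2 * b) * a + (b ^ 2 + b) * 1 = (a - b) ^ 2 + a + b"
      by (simp add: power2_eq_square algebra_simps)
    show ?thesis
      using moments unfolding g_eq sum_eq .
  qed
  have "((\<lambda>(x, y). (real x - real y) ^ 2 * (poi a x * poi b y)) has_sum ((a - b) ^ 2 + a + b))
          (UNIV \<times> UNIV)"
    using inner outer assms by (intro has_sum_Sigma_nonneg) (auto simp: poi_nonneg)
  then show ?thesis
    by simp
qed

lemma pdiff_nonneg: "a \<ge> 0 \<Longrightarrow> b \<ge> 0 \<Longrightarrow> pdiff a b k \<ge> 0"
  by (auto simp: pdiff_def poi_nonneg intro!: infsum_nonneg)

lemma pdiff_tail_le:
  assumes "a \<ge> 0" "b \<ge> 0" "t > 0"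
  shows "(\<Sum>\<^sub>\<infinity>k\<in>{k::int. t \<le> real_of_int \<bar>k\<bar>}. pdiff a b k)
           \<le> ((a - b) ^ 2 + a + b) / t ^ 2"
proof -
  define diff :: "nat \<times> nat \<Rightarrow> int" where "diff = (\<lambda>(x, y). int x - int y)"
  define A where "A = {k::int. t \<le> real_of_int \<bar>k\<bar>}"
  have fibre: "{(x, y). int x - int y = k} = {p. diff p = k}" for k
    by (auto simp: diff_def)
  have "(\<lambda>(x, y). poi a x * poi b y) summable_on {p. diff p \<in> A}"
    using has_sum_imp_summable[OF poi_pair_has_sum[OF assms(1,2)]]
    by (rule summable_on_subset_banach) simp
  then have "(\<Sum>\<^sub>\<infinity>k\<in>A. pdiff a b k) = (\<Sum>\<^sub>\<infinity>(x, y)\<in>{p. diff p \<in> A}. poi a x * poi b y)"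
    unfolding pdiff_def fibre by (rule infsum_infsum_fibres)
  also have "\<dots> \<le> ((a - b) ^ 2 + a + b) / t ^ 2"
  proof (rule infsum_Markov_inequality[OF poi_diff_second_moment_has_sum[OF assms(1,2)]])
    fix p assume "p \<in> {p. diff p \<in> A}"
    then obtain x y where p: "p = (x, y)" and "t \<le> \<bar>real x - real y\<bar>"
      by (cases p) (auto simp: diff_def A_def)
    then have "t ^ 2 \<le> (real x - real y) ^ 2"
      using \<open>t > 0\<close> by (metis power2_abs power_mono less_imp_le)
    then show "t ^ 2 * (case p of (x, y) \<Rightarrow> poi a x * poi b y)
                 \<le> (case p of (x, y) \<Rightarrow> (real x - real y) ^ 2 * (poi a x * poi b y))"
      using assms by (simp add: p mult_right_mono poi_nonneg)
  qed (use assms in \<open>auto simp: poi_nonneg\<close>)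
  finally show ?thesis
    by (simp add: A_def)
qed

text \<open>\<open>z powr (n/2) * bessel_sum z n\<close> is the modified Bessel function \<open>I\<^sub>n(2 sqrt z)\<close>.\<close>
definition bessel_sum :: "real \<Rightarrow> nat \<Rightarrow> real" where
  "bessel_sum z n = (\<Sum>\<^sub>\<infinity>j. z ^ j / (fact (j + n) * fact j))"

lemma bessel_sum_nonneg: "z \<ge> 0 \<Longrightarrow> bessel_sum z n \<ge> 0"
  unfolding bessel_sum_def by (rule infsum_nonneg) simp

lemma pdiff_uminus: "pdiff a b (- k) = pdiff b a k"
proof -
  have "{(x::nat, y::nat). int x - int y = - k} = prod.swap ` {(y, x). int y - int x = k}"
    by (auto simp: image_def)
  then show ?thesis
    unfolding pdiff_def by (simp add: infsum_reindex o_def mult.commute)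
qed

lemma pdiff_of_nat: "pdiff a b (int n) = exp (- (a + b)) * a ^ n * bessel_sum (a * b) n"
proof -
  have fibre: "{(x::nat, y::nat). int x - int y = int n} = (\<lambda>j. (j + n, j)) ` UNIV"
    by (auto simp: image_def)
  have "pdiff a b (int n) = (\<Sum>\<^sub>\<infinity>j. poi a (j + n) * poi b j)"
    unfolding pdiff_def fibre by (subst infsum_reindex) (auto simp: inj_on_def o_def)
  also have "\<dots> = (\<Sum>\<^sub>\<infinity>j. exp (- (a + b)) * a ^ n * ((a * b) ^ j / (fact (j + n) * fact j)))"
    by (rule infsum_cong)
       (simp add: poi_def power_add power_mult_distrib exp_add[symmetric] field_simps)
  also have "\<dots> = exp (- (a + b)) * a ^ n * bessel_sum (a * b) n"
    unfolding bessel_sum_def by (rule infsum_cmult_right')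
  finally show ?thesis .
qed

lemma sqrt_pdiff_mult_pdiff_uminus:
  assumes "a \<ge> 0" "b \<ge> 0"
  defines "c \<equiv> sqrt (a * b)"
  shows "sqrt (pdiff a b k * pdiff a b (- k)) = exp (2 * c - (a + b)) * pdiff c c k"
proof -
  have c: "c \<ge> 0" "c * c = a * b"
    using assms by (simp_all add: c_def)
  have of_nat: "sqrt (pdiff a b (int n) * pdiff a b (- int n))
                  = exp (2 * c - (a + b)) * pdiff c c (int n)" for n
  proof -
    define B where "B = bessel_sum (a * b) n"
    have "B \<ge> 0"
      using assms by (simp add: B_def bessel_sum_nonneg)
    have "a ^ n * b ^ n = c ^ n * c ^ n"
      by (simp add: power_mult_distrib[symmetric] c)
    then have "pdiff a b (int n) * pdiff a b (- int n) = (exp (- (a + b)) * c ^ n * B) ^ 2"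
      unfolding pdiff_uminus pdiff_of_nat B_def mult.commute[of b a] add.commute[of b a]
      by (simp add: power2_eq_square mult_ac)
    then have "sqrt (pdiff a b (int n) * pdiff a b (- int n)) = exp (- (a + b)) * c ^ n * B"
      using \<open>B \<ge> 0\<close> c by simp
    also have "\<dots> = exp (2 * c - (a + b)) * (exp (- (c + c)) * c ^ n * B)"
      by (simp add: mult.assoc exp_add[symmetric])
    finally show ?thesis
      by (simp add: pdiff_of_nat c B_def)
  qed
  show ?thesis
  proof (cases "k \<ge> 0")
    case True
    then show ?thesis
      using of_nat by (metis nonneg_int_cases)
  next
    case False
    then obtain n where "k = - int n"
      by (metis minus_minus neg_0_le_iff_le nle_le nonneg_int_cases)
    then show ?thesis
      using of_nat[of n] by (simp add: pdiff_uminus mult.commute)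
  qed
qed

theorem lemma2:
  fixes a b :: real and N :: nat
  assumes "a \<ge> 0" and "b \<ge> 0" and "N \<ge> 1"
  shows "(\<Sum>\<^sub>\<infinity>k \<in> {k::int. real_of_int \<bar>k\<bar> \<ge> sqrt (real N)}.
            sqrt (pdiff a b k * pdiff a b (- k))) \<le> 2 * sqrt (a * b) / real N"
proof -
  define c where "c = sqrt (a * b)"
  define A where "A = {k::int. sqrt (real N) \<le> real_of_int \<bar>k\<bar>}"
  have "c \<ge> 0"
    using assms by (simp add: c_def)
  have "exp (2 * c - (a + b)) \<le> 1"
    using arith_geo_mean_sqrt[OF assms(1,2)] by (simp add: c_def)
  have "(\<Sum>\<^sub>\<infinity>k\<in>A. sqrt (pdiff a b k * pdiff a b (- k)))
          = exp (2 * c - (a + b)) * (\<Sum>\<^sub>\<infinity>k\<in>A. pdiff c c k)"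
    using sqrt_pdiff_mult_pdiff_uminus[OF assms(1,2)] by (simp add: c_def infsum_cmult_right')
  also have "\<dots> \<le> (\<Sum>\<^sub>\<infinity>k\<in>A. pdiff c c k)"
    using \<open>exp (2 * c - (a + b)) \<le> 1\<close> \<open>c \<ge> 0\<close>
    by (intro mult_left_le_one_le infsum_nonneg pdiff_nonneg) auto
  also have "\<dots> \<le> ((c - c) ^ 2 + c + c) / sqrt (real N) ^ 2"
    unfolding A_def using \<open>c \<ge> 0\<close> assms(3) by (intro pdiff_tail_le) auto
  finally show ?thesis
    by (simp add: A_def c_def)
qed

end
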